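(* Let $(X,d)$ be a Hadamard space, $\mathbf a$ a mask with associated barycentric scheme $S$, and $x\in\ell^\infty(\mathbb Z^s,X)$. Then for all $n\in\mathbb N_0$, $i\in\mathbb Z^s$ and $z\in X$, $$d\big((S^nx)_i,z\big)\le\sum_{k\in\mathbb Z^s}a^{(n)}_{i-2^nk}\,d(x_k,z),$$ and consequently for all $i,j\in\mathbb Z^s$, $d\big((S^nx)_i,(S^nx)_j\big)\le\sum_{k,\ell\in\mathbb Z^s}a^{(n)}_{i-2^nk}a^{(n)}_{j-2^n\ell}\,d(x_k,x_\ell)$.
   Context: Hadamard space: complete metric space $(X,d)$ such that for any $x_0,x_1\in X$ there is $y$ with $d(z,y)^2\le\frac12d(z,x_0)^2+\frac12d(z,x_1)^2-\frac14d(x_0,x_1)^2$ for all $z$. Mask: finitely supported nonnegative $(a_i)_{i\in\mathbb Z^s}$ with $\sum_j a_{i-2j}=1$ for all $i$. Barycentric scheme: $Sx_i=\operatorname{argmin}_{y\in X}\sum_j a_{i-2j}d^2(x_j,y)$. The sequences $a^{(n)}$ are defined by $a^{(0)}_i=\delta_{i,0}$, $a^{(n+1)}_i=\sum_ja_{i-2j}a^{(n)}_j$. *)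

theory Defs
  imports "HOL-Analysis.Analysis"
begin

definition hadamard_space :: "'a::metric_space itself \<Rightarrow> bool" where
  "hadamard_space _ \<longleftrightarrow> complete (UNIV :: 'a set) \<and>
     (\<forall>x0 x1 :: 'a. \<exists>y. \<forall>z.
        (dist z y)\<^sup>2 \<le> (dist z x0)\<^sup>2 / 2 + (dist z x1)\<^sup>2 / 2 - (dist x0 x1)\<^sup>2 / 4)"

definition fsum :: "('b \<Rightarrow> real) \<Rightarrow> real" where
  "fsum f = (\<Sum>k\<in>{k. f k \<noteq> 0}. f k)"

definition is_mask :: "(int ^ 's \<Rightarrow> real) \<Rightarrow> bool" where
  "is_mask a \<longleftrightarrow> finite {i. a i \<noteq> 0} \<and> (\<forall>i. a i \<ge> 0) \<and>
     (\<forall>i. fsum (\<lambda>j. a (i - 2 *s j)) = 1)"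

definition bary_scheme :: "(int ^ 's \<Rightarrow> real) \<Rightarrow> (int ^ 's \<Rightarrow> 'a::metric_space) \<Rightarrow> (int ^ 's \<Rightarrow> 'a)" where
  "bary_scheme a x = (\<lambda>i. arg_min (\<lambda>y. fsum (\<lambda>j. a (i - 2 *s j) * (dist (x j) y)\<^sup>2)) (\<lambda>_. True))"

fun mask_pow :: "(int ^ 's \<Rightarrow> real) \<Rightarrow> nat \<Rightarrow> int ^ 's \<Rightarrow> real" where
  "mask_pow a 0 = (\<lambda>i. if i = 0 then 1 else 0)"
| "mask_pow a (Suc n) = (\<lambda>i. fsum (\<lambda>j. a (i - 2 *s j) * mask_pow a n j))"

end

theory Submission
  imports Defs
begin

(* For finitely many probability weights w on points p in a Hadamard space,
   the weighted variance  V(y) = sum_j w_j d(p_j,y)^2  satisfies a midpoint inequality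
   inherited from the CAT(0) inequality.  This gives (1) existence of a minimiser
   (minimising sequences are Cauchy, and the space is complete), (2) the variance
   inequality  V(b) + d(z,b)^2 <= V(z)  at every minimiser b, and (3) from it the Jensen
   inequality  d(b,z) <= sum_j w_j d(p_j,z).  For a mask, each value of the barycentric
   scheme is such a minimiser, so one step of the scheme contracts distances to any z
   into a convex combination.  Iterating, and using the convolution identity satisfied
   by the iterated masks a^(n), yields the first estimate by induction on n; the second
   follows by applying the first twice.  All sums are finite because masks have finite
   support. *)

section \<open>Weighted variance in Hadamard spaces\<close>

definition prob_weights :: "'i set \<Rightarrow> ('i \<Rightarrow> real) \<Rightarrow> bool" where
  "prob_weights J w \<longleftrightarrow> finite J \<and> (\<forall>j\<in>J. w j \<ge> 0) \<and> sum w J = 1"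

definition wvar :: "'i set \<Rightarrow> ('i \<Rightarrow> real) \<Rightarrow> ('i \<Rightarrow> 'a::metric_space) \<Rightarrow> 'a \<Rightarrow> real" where
  "wvar J w p y = (\<Sum>j\<in>J. w j * (dist (p j) y)\<^sup>2)"

lemma wvar_nonneg: "prob_weights J w \<Longrightarrow> wvar J w p y \<ge> 0"
  unfolding prob_weights_def wvar_def by (intro sum_nonneg) auto

lemma hadamard_midpoint:
  assumes "hadamard_space TYPE('a::metric_space)"
  shows "\<exists>c. \<forall>z::'a. (dist z c)\<^sup>2 \<le> (dist z u)\<^sup>2 / 2 + (dist z v)\<^sup>2 / 2 - (dist u v)\<^sup>2 / 4"
  using assms unfolding hadamard_space_def by blast

lemma hadamard_complete:
  assumes "hadamard_space TYPE('a::metric_space)"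
  shows "complete (UNIV :: 'a set)"
  using assms unfolding hadamard_space_def by blast

lemma wvar_midpoint:
  fixes c :: "'a::metric_space"
  assumes w: "prob_weights J w"
    and c: "\<forall>z. (dist z c)\<^sup>2 \<le> (dist z u)\<^sup>2 / 2 + (dist z v)\<^sup>2 / 2 - (dist u v)\<^sup>2 / 4"
  shows "wvar J w p c \<le> wvar J w p u / 2 + wvar J w p v / 2 - (dist u v)\<^sup>2 / 4"
proof -
  have "wvar J w p c \<le> (\<Sum>j\<in>J. w j * ((dist (p j) u)\<^sup>2 / 2 + (dist (p j) v)\<^sup>2 / 2 - (dist u v)\<^sup>2 / 4))"
    unfolding wvar_def by (intro sum_mono mult_left_mono) (use c w in \<open>auto simp: prob_weights_def\<close>)
  also have "\<dots> = wvar J w p u / 2 + wvar J w p v / 2 - (dist u v)\<^sup>2 / 4 * sum w J"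
    by (simp add: wvar_def algebra_simps sum.distrib sum_subtractf sum_divide_distrib
        sum_distrib_left sum_distrib_right)
  finally show ?thesis using w unfolding prob_weights_def by simp
qed

text \<open>Two points whose variances are both within e of a lower bound m are within
  distance 2 sqrt e of each other; this makes minimising sequences Cauchy.\<close>
lemma near_minimisers_close:
  assumes H: "hadamard_space TYPE('a::metric_space)" and w: "prob_weights J w"
    and m: "\<And>y. m \<le> wvar J w p y"
    and u: "wvar J w p u \<le> m + e" and v: "wvar J w p v \<le> m + e"
  shows "(dist u (v::'a))\<^sup>2 \<le> 4 * e"
proof -
  obtain c where "\<forall>z. (dist z c)\<^sup>2 \<le> (dist z u)\<^sup>2 / 2 + (dist z v)\<^sup>2 / 2 - (dist u v)\<^sup>2 / 4"
    using hadamard_midpoint[OF H] by blast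
  then have "wvar J w p c \<le> wvar J w p u / 2 + wvar J w p v / 2 - (dist u v)\<^sup>2 / 4"
    by (rule wvar_midpoint[OF w])
  with m[of c] u v show ?thesis by linarith
qed

lemma wvar_minimiser_exists:
  assumes H: "hadamard_space TYPE('a::metric_space)" and w: "prob_weights J w"
  shows "\<exists>b::'a. \<forall>y. wvar J w p b \<le> wvar J w p y"
proof -
  define F where "F = wvar J w p"
  define m where "m = Inf (range F)"
  have bdd: "bdd_below (range F)"
    using wvar_nonneg[OF w] by (intro bdd_belowI[of _ 0]) (auto simp: F_def)
  have mle: "m \<le> F y" for y unfolding m_def using bdd by (simp add: cInf_lower)
  have "\<exists>y. F y < m + inverse (real (Suc n))" for n
    using cInf_less_iff[OF _ bdd, of "m + inverse (real (Suc n))"] by (auto simp: m_def)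
  then obtain y where y: "\<And>n. F (y n) < m + inverse (real (Suc n))" by metis
  have y_le: "F (y n) \<le> m + inverse (real (Suc M))" if "n \<ge> M" for n M
  proof -
    have "inverse (real (Suc n)) \<le> inverse (real (Suc M))"
      using that by (simp add: le_imp_inverse_le)
    with y[of n] show ?thesis by linarith
  qed
  have "Cauchy y"
  proof (rule metric_CauchyI)
    fix e :: real assume e: "e > 0"
    then obtain M where M: "inverse (real (Suc M)) < e\<^sup>2 / 4"
      using reals_Archimedean[of "e\<^sup>2/4"] by auto
    have "dist (y n) (y k) < e" if "n \<ge> M" "k \<ge> M" for n k
    proof -
      have "(dist (y n) (y k))\<^sup>2 \<le> 4 * inverse (real (Suc M))"
        by (rule near_minimisers_close[OF H w]) (use mle y_le that in \<open>auto simp: F_def\<close>)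
      with M have "(dist (y n) (y k))\<^sup>2 < e\<^sup>2" by linarith
      then show ?thesis using e by (simp add: power_less_imp_less_base)
    qed
    then show "\<exists>M. \<forall>m\<ge>M. \<forall>n\<ge>M. dist (y m) (y n) < e" by blast
  qed
  then obtain b where b: "y \<longlonglongrightarrow> b"
    using hadamard_complete[OF H] unfolding complete_def by blast
  have "(\<lambda>n. F (y n)) \<longlonglongrightarrow> F b"
    unfolding F_def wvar_def by (intro tendsto_intros b)
  moreover have "(\<lambda>n. F (y n)) \<longlonglongrightarrow> m"
  proof (rule tendsto_sandwich[of "\<lambda>_. m" _ _ "\<lambda>n. m + inverse (real (Suc n))"])
    show "(\<lambda>n. m + inverse (real (Suc n))) \<longlonglongrightarrow> m"
      using tendsto_add[OF tendsto_const LIMSEQ_inverse_real_of_nat, of m] by simp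
  qed (use mle y in \<open>auto intro: less_imp_le always_eventually\<close>)
  ultimately have "F b = m" using LIMSEQ_unique by blast
  then show ?thesis using mle unfolding F_def by metis
qed

text \<open>Bootstrapping step for the variance inequality: a quadratic growth bound with
  constant t around a minimiser improves to constant (1 + t) / 2, via the midpoint of b and z.\<close>
lemma variance_step:
  assumes H: "hadamard_space TYPE('a::metric_space)" and w: "prob_weights J w"
    and t: "0 \<le> t" "t \<le> 1"
    and growth: "\<And>y. wvar J w p b + t * (dist y b)\<^sup>2 \<le> wvar J w p y"
  shows "wvar J w p b + (1 + t) / 2 * (dist z (b::'a))\<^sup>2 \<le> wvar J w p z"
proof -
  define F where "F = wvar J w p"
  define d where "d = dist z b"
  obtain c where c: "\<forall>v. (dist v c)\<^sup>2 \<le> (dist v b)\<^sup>2 / 2 + (dist v z)\<^sup>2 / 2 - (dist b z)\<^sup>2 / 4"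
    using hadamard_midpoint[OF H] by blast
  have Fc: "F c \<le> F b / 2 + F z / 2 - d\<^sup>2 / 4"
    using wvar_midpoint[OF w c] by (simp add: F_def d_def dist_commute)
  text \<open>The midpoint c is at distance at least d/2 from b, by the triangle inequality.\<close>
  have "(dist z c)\<^sup>2 \<le> (d/2)\<^sup>2"
    using c[rule_format, of z] by (simp add: d_def dist_commute power_divide)
  then have "dist z c \<le> d/2" by (rule power2_le_imp_le) (simp add: d_def)
  moreover have "d \<le> dist z c + dist c b" unfolding d_def by (rule dist_triangle)
  ultimately have "(d/2)\<^sup>2 \<le> (dist c b)\<^sup>2" by (intro power_mono) (auto simp: d_def)
  then have "t * (d\<^sup>2/4) \<le> t * (dist c b)\<^sup>2"
    using t by (intro mult_left_mono) (auto simp: power_divide)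
  moreover have "F b + t * (dist c b)\<^sup>2 \<le> F c" using growth by (simp add: F_def)
  moreover have "(1 + t) / 2 * d\<^sup>2 = t * (d\<^sup>2/4) * 2 + d\<^sup>2/2" by (simp add: field_simps)
  ultimately have "F b + (1 + t) / 2 * d\<^sup>2 \<le> F z" using Fc by linarith
  then show ?thesis by (simp add: F_def d_def)
qed

text \<open>Variance inequality: at a minimiser b, the variance grows at least quadratically,
  V(b) + d(z,b)^2 <= V(z).  Iterating the step from t = 0 gives t = 1 - 2^-n.\<close>
lemma variance_inequality:
  assumes H: "hadamard_space TYPE('a::metric_space)" and w: "prob_weights J w"
    and b: "\<And>y. wvar J w p b \<le> wvar J w p y"
  shows "wvar J w p b + (dist z (b::'a))\<^sup>2 \<le> wvar J w p z"
proof -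
  have growth: "wvar J w p b + (1 - (1/2)^n) * (dist y b)\<^sup>2 \<le> wvar J w p y" for n y
  proof (induction n arbitrary: y)
    case 0
    then show ?case using b by simp
  next
    case (Suc n)
    have coeff: "(1 + (1 - (1/2::real)^n)) / 2 = 1 - (1/2)^Suc n" by simp
    have "(1/2::real)^n \<le> 1" by (simp add: power_le_one)
    then show ?case
      unfolding coeff[symmetric] by (intro variance_step[OF H w _ _ Suc.IH]) auto
  qed
  have "(\<lambda>n. wvar J w p b + (1 - (1/2::real)^n) * (dist z b)\<^sup>2)
          \<longlonglongrightarrow> wvar J w p b + (1 - 0) * (dist z b)\<^sup>2"
    by (intro tendsto_intros LIMSEQ_power_zero) simp
  then have "wvar J w p b + (1 - 0) * (dist z b)\<^sup>2 \<le> wvar J w p z"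
    by (rule LIMSEQ_le_const2) (use growth in blast)
  then show ?thesis by simp
qed

lemma barycentre_jensen:
  assumes H: "hadamard_space TYPE('a::metric_space)" and w: "prob_weights J w"
    and b: "\<And>y. wvar J w p b \<le> wvar J w p y"
  shows "dist b z \<le> (\<Sum>j\<in>J. w j * dist (p j) (z::'a))"
proof -
  define d where "d = dist z b"
  define M where "M = (\<Sum>j\<in>J. w j * dist (p j) z)"
  have w_nonneg: "\<forall>j\<in>J. w j \<ge> 0" and w_sum: "sum w J = 1"
    using w by (auto simp: prob_weights_def)
  text \<open>Pointwise, by the triangle inequality |d - d(p_j,z)| <= d(p_j,b).\<close>
  have pointwise: "(dist (p j) z)\<^sup>2 - (dist (p j) b)\<^sup>2 \<le> 2 * d * dist (p j) z - d\<^sup>2" for j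
  proof -
    have "\<bar>d - dist (p j) z\<bar> \<le> dist (p j) b"
      unfolding d_def by (metis abs_diff_le_iff dist_commute dist_triangle add.commute diff_le_eq
          le_diff_eq)
    then have "(d - dist (p j) z)\<^sup>2 \<le> (dist (p j) b)\<^sup>2"
      by (metis abs_ge_zero power2_abs power_mono)
    then show ?thesis by (simp add: power2_diff)
  qed
  have "d\<^sup>2 \<le> wvar J w p z - wvar J w p b"
    using variance_inequality[OF H w b, of z] by (simp add: d_def)
  also have "\<dots> = (\<Sum>j\<in>J. w j * ((dist (p j) z)\<^sup>2 - (dist (p j) b)\<^sup>2))"
    by (simp add: wvar_def sum_subtractf algebra_simps)
  also have "\<dots> \<le> (\<Sum>j\<in>J. w j * (2 * d * dist (p j) z - d\<^sup>2))"
    by (intro sum_mono mult_left_mono) (use pointwise w_nonneg in auto)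
  also have "\<dots> = 2 * d * M - d\<^sup>2"
    using w_sum by (simp add: M_def algebra_simps sum_subtractf sum_distrib_left
        sum_distrib_right[symmetric])
  finally have "d * d \<le> d * M" by (simp add: power2_eq_square)
  moreover have "0 \<le> M" unfolding M_def using w_nonneg by (intro sum_nonneg) auto
  ultimately have "d \<le> M" by (cases "d = 0") (auto simp: d_def)
  then show ?thesis by (simp add: d_def M_def dist_commute)
qed

section \<open>Finitely supported sums and iterated masks\<close>

lemma fsum_eq: "finite T \<Longrightarrow> {k. f k \<noteq> 0} \<subseteq> T \<Longrightarrow> fsum f = sum f T"
  unfolding fsum_def by (rule sum.mono_neutral_left) auto

lemma finite_support_affine:
  fixes g :: "int^'s \<Rightarrow> real"
  assumes "finite {i. g i \<noteq> 0}" "c \<noteq> 0"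
  shows "finite {k. g (i - c *s k) \<noteq> 0}"
proof -
  have "inj (\<lambda>k::int^'s. i - c *s k)" using assms(2) by (auto simp: inj_def vec_eq_iff)
  moreover have "{k. g (i - c *s k) \<noteq> 0} = (\<lambda>k. i - c *s k) -` {i. g i \<noteq> 0}" by auto
  ultimately show ?thesis using finite_vimageI[OF assms(1)] by simp
qed

definition mask_support :: "(int ^ 's \<Rightarrow> real) \<Rightarrow> int ^ 's \<Rightarrow> (int ^ 's) set" where
  "mask_support a i = {j. a (i - 2 *s j) \<noteq> 0}"

lemma mask_prob_weights:
  assumes "is_mask a"
  shows "prob_weights (mask_support a i) (\<lambda>j. a (i - 2 *s j))"
  using assms finite_support_affine[of a 2 i]
  unfolding prob_weights_def is_mask_def mask_support_def fsum_def by auto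

lemma mask_pow_nonneg: "is_mask a \<Longrightarrow> mask_pow a n i \<ge> 0"
  by (induction n arbitrary: i) (simp_all add: fsum_def is_mask_def sum_nonneg)

text \<open>Iterated masks are finitely supported: supp a^(n+1) \<subseteq> supp a + 2 supp a^(n).\<close>
lemma mask_pow_finite_support: "is_mask a \<Longrightarrow> finite {i. mask_pow a n i \<noteq> 0}"
proof (induction n)
  case 0
  then show ?case by simp
next
  case (Suc n)
  let ?A = "{i. a i \<noteq> 0}" and ?B = "{i. mask_pow a n i \<noteq> 0}"
  have "{i. mask_pow a (Suc n) i \<noteq> 0} \<subseteq> (\<lambda>(s, j). s + 2 *s j) ` (?A \<times> ?B)"
  proof
    fix i assume "i \<in> {i. mask_pow a (Suc n) i \<noteq> 0}"
    then have "fsum (\<lambda>j. a (i - 2 *s j) * mask_pow a n j) \<noteq> 0" by simp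
    then obtain j where "a (i - 2 *s j) * mask_pow a n j \<noteq> 0"
      unfolding fsum_def by (metis (mono_tags, lifting) mem_Collect_eq sum.neutral)
    then have "(i - 2 *s j, j) \<in> ?A \<times> ?B" by auto
    then show "i \<in> (\<lambda>(s, j). s + 2 *s j) ` (?A \<times> ?B)" by force
  qed
  moreover have "finite ?A" using Suc.prems by (simp add: is_mask_def)
  ultimately show ?case using Suc.IH Suc.prems by (meson finite_SigmaI finite_imageI finite_subset)
qed

lemma mask_pow_shifted_finite_support:
  "is_mask a \<Longrightarrow> finite {k. mask_pow a n (i - 2 ^ n *s k) \<noteq> 0}"
  by (intro finite_support_affine mask_pow_finite_support) auto

lemma mask_pow_Suc_shift:
  fixes a :: "int^'s \<Rightarrow> real" and k :: "int^'s"
  assumes a: "is_mask a"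
  shows "mask_pow a (Suc n) (i - 2 ^ Suc n *s k) =
    (\<Sum>j\<in>mask_support a i. a (i - 2 *s j) * mask_pow a n (j - 2 ^ n *s k))"
proof -
  define J where "J = mask_support a i"
  have J: "finite J" using mask_prob_weights[OF a] by (simp add: J_def prob_weights_def)
  let ?h = "\<lambda>j::int^'s. j - 2 ^ n *s k"
  have shift: "i - 2 ^ Suc n *s k - 2 *s ?h j = i - 2 *s j" for j
    by (simp add: vec_eq_iff algebra_simps)
  have "mask_pow a (Suc n) (i - 2 ^ Suc n *s k)
      = (\<Sum>j\<in>?h ` J. a (i - 2 ^ Suc n *s k - 2 *s j) * mask_pow a n j)"
  proof (simp only: mask_pow.simps, rule fsum_eq)
    show "{j. a (i - 2 ^ Suc n *s k - 2 *s j) * mask_pow a n j \<noteq> 0} \<subseteq> ?h ` J"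
    proof
      fix j assume "j \<in> {j. a (i - 2 ^ Suc n *s k - 2 *s j) * mask_pow a n j \<noteq> 0}"
      then have "a (i - 2 ^ Suc n *s k - 2 *s ?h (j + 2^n *s k)) \<noteq> 0" by simp
      then have "j + 2^n *s k \<in> J" unfolding shift by (simp add: J_def mask_support_def)
      then show "j \<in> ?h ` J" by (intro image_eqI[of _ _ "j + 2^n *s k"]) auto
    qed
  qed (use J in simp)
  also have "\<dots> = (\<Sum>j\<in>J. a (i - 2 *s j) * mask_pow a n (?h j))"
    by (subst sum.reindex) (auto simp: inj_on_def shift)
  finally show ?thesis by (simp add: J_def)
qed

lemma mask_pow_Suc_convolution:
  fixes a :: "int^'s \<Rightarrow> real" and d :: "int^'s \<Rightarrow> real"
  assumes a: "is_mask a"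
  shows "(\<Sum>j\<in>mask_support a i. a (i - 2 *s j) * fsum (\<lambda>k. mask_pow a n (j - 2^n *s k) * d k))
       = fsum (\<lambda>k. mask_pow a (Suc n) (i - 2 ^ Suc n *s k) * d k)"
proof -
  define J where "J = mask_support a i"
  define A where "A = mask_pow a n"
  define K where "K = (\<Union>j\<in>J. {k. A (j - 2^n *s k) \<noteq> 0})"
  have J: "finite J" using mask_prob_weights[OF a] by (simp add: J_def prob_weights_def)
  have K: "finite K" unfolding K_def A_def using J mask_pow_shifted_finite_support[OF a] by blast
  have "(\<Sum>j\<in>J. a (i - 2 *s j) * fsum (\<lambda>k. A (j - 2^n *s k) * d k))
      = (\<Sum>j\<in>J. a (i - 2 *s j) * (\<Sum>k\<in>K. A (j - 2^n *s k) * d k))"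
    by (intro sum.cong refl arg_cong2[where f = "(*)"] fsum_eq[OF K]) (auto simp: K_def)
  also have "\<dots> = (\<Sum>k\<in>K. (\<Sum>j\<in>J. a (i - 2 *s j) * A (j - 2^n *s k)) * d k)"
    by (simp add: sum_distrib_left sum_distrib_right algebra_simps sum.swap[of _ J K])
  also have "\<dots> = (\<Sum>k\<in>K. mask_pow a (Suc n) (i - 2 ^ Suc n *s k) * d k)"
    unfolding A_def J_def mask_pow_Suc_shift[OF a] ..
  also have "\<dots> = fsum (\<lambda>k. mask_pow a (Suc n) (i - 2 ^ Suc n *s k) * d k)"
  proof (rule fsum_eq[OF K, symmetric], rule subsetI)
    fix k assume "k \<in> {k. mask_pow a (Suc n) (i - 2 ^ Suc n *s k) * d k \<noteq> 0}"
    then have "(\<Sum>j\<in>J. a (i - 2 *s j) * A (j - 2^n *s k)) \<noteq> 0"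
      unfolding A_def J_def mask_pow_Suc_shift[OF a] by auto
    then obtain j where "j \<in> J" "A (j - 2^n *s k) \<noteq> 0"
      by (metis (no_types, lifting) mult_zero_right sum.neutral)
    then show "k \<in> K" unfolding K_def by blast
  qed
  finally show ?thesis by (simp add: J_def A_def)
qed

section \<open>Distance estimates for the barycentric scheme\<close>

text \<open>Each value of the scheme is a barycentre of the contributing data, hence obeys the
  Jensen inequality: one step of the scheme.\<close>
lemma bary_scheme_jensen:
  fixes y :: "int ^ 's \<Rightarrow> 'a::metric_space"
  assumes H: "hadamard_space TYPE('a)" and a: "is_mask a"
  shows "dist (bary_scheme a y i) z \<le> (\<Sum>j\<in>mask_support a i. a (i - 2 *s j) * dist (y j) z)"
proof -
  define J where "J = mask_support a i"
  define w where "w = (\<lambda>j. a (i - 2 *s j))"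
  have w: "prob_weights J w" using mask_prob_weights[OF a] by (simp add: J_def w_def)
  have F: "(\<lambda>v. fsum (\<lambda>j. a (i - 2 *s j) * (dist (y j) v)\<^sup>2)) = wvar J w y"
    unfolding wvar_def w_def
    by (rule ext, rule fsum_eq) (use w in \<open>auto simp: J_def mask_support_def prob_weights_def\<close>)
  obtain b where b: "\<forall>v. wvar J w y b \<le> wvar J w y v"
    using wvar_minimiser_exists[OF H w] by blast
  have "bary_scheme a y i = arg_min (wvar J w y) (\<lambda>_. True)"
    unfolding bary_scheme_def F ..
  moreover have "wvar J w y (arg_min (wvar J w y) (\<lambda>_. True)) = wvar J w y b"
    by (rule arg_min_equality) (use b in auto)
  ultimately have "\<forall>v. wvar J w y (bary_scheme a y i) \<le> wvar J w y v" using b by simp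
  then show ?thesis using barycentre_jensen[OF H w] by (simp add: J_def w_def)
qed

lemma bary_scheme_iterate_dist:
  fixes a :: "int ^ 's \<Rightarrow> real" and x :: "int ^ 's \<Rightarrow> 'a::metric_space"
  assumes H: "hadamard_space TYPE('a)" and a: "is_mask a"
  shows "dist (((bary_scheme a) ^^ n) x i) z
           \<le> fsum (\<lambda>k. mask_pow a n (i - (2 ^ n) *s k) * dist (x k) z)"
proof (induction n arbitrary: i)
  case 0
  have "fsum (\<lambda>k. mask_pow a 0 (i - (2 ^ 0) *s k) * dist (x k) z) = dist (x i) z"
    by (subst fsum_eq[of "{i}"]) auto
  then show ?case by simp
next
  case (Suc n)
  have w: "\<forall>j\<in>mask_support a i. a (i - 2 *s j) \<ge> 0"
    using a by (simp add: is_mask_def)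
  have "dist (((bary_scheme a) ^^ Suc n) x i) z
      \<le> (\<Sum>j\<in>mask_support a i. a (i - 2 *s j) * dist (((bary_scheme a) ^^ n) x j) z)"
    using bary_scheme_jensen[OF H a] by simp
  also have "\<dots> \<le> (\<Sum>j\<in>mask_support a i.
                     a (i - 2 *s j) * fsum (\<lambda>k. mask_pow a n (j - 2^n *s k) * dist (x k) z))"
    by (intro sum_mono mult_left_mono) (use w Suc.IH in auto)
  also have "\<dots> = fsum (\<lambda>k. mask_pow a (Suc n) (i - 2 ^ Suc n *s k) * dist (x k) z)"
    by (rule mask_pow_Suc_convolution[OF a])
  finally show ?case .
qed

text \<open>A bound of the distances to arbitrary points by nonnegative finitely supported weights
  yields a bound of mutual distances, by applying it once at each end.\<close>
lemma pairwise_dist_from_pointwise: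
  fixes S :: "'i \<Rightarrow> 'a::metric_space" and x :: "'k \<Rightarrow> 'a" and A :: "'i \<Rightarrow> 'k \<Rightarrow> real"
  assumes fin: "\<And>i. finite {k. A i k \<noteq> 0}" and nonneg: "\<And>i k. A i k \<ge> 0"
    and bound: "\<And>i z. dist (S i) z \<le> fsum (\<lambda>k. A i k * dist (x k) z)"
  shows "dist (S i) (S j) \<le> fsum (\<lambda>(k, l). A i k * A j l * dist (x k) (x l))"
proof -
  define K where "K = {k. A i k \<noteq> 0}"
  define L where "L = {l. A j l \<noteq> 0}"
  have K: "finite K" and L: "finite L" using fin by (simp_all add: K_def L_def)
  have to_x: "dist (x k) (S j) \<le> (\<Sum>l\<in>L. A j l * dist (x k) (x l))" for k
  proof -
    have "dist (x k) (S j) \<le> fsum (\<lambda>l. A j l * dist (x l) (x k))"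
      using bound[of j "x k"] by (simp add: dist_commute)
    also have "\<dots> = (\<Sum>l\<in>L. A j l * dist (x k) (x l))"
      by (subst fsum_eq[OF L]) (auto simp: L_def dist_commute)
    finally show ?thesis .
  qed
  have "dist (S i) (S j) \<le> fsum (\<lambda>k. A i k * dist (x k) (S j))" by (rule bound)
  also have "\<dots> = (\<Sum>k\<in>K. A i k * dist (x k) (S j))"
    by (rule fsum_eq[OF K]) (auto simp: K_def)
  also have "\<dots> \<le> (\<Sum>k\<in>K. A i k * (\<Sum>l\<in>L. A j l * dist (x k) (x l)))"
    by (intro sum_mono mult_left_mono nonneg to_x)
  also have "\<dots> = (\<Sum>(k, l)\<in>K \<times> L. A i k * A j l * dist (x k) (x l))"
    by (simp add: sum.cartesian_product[symmetric] sum_distrib_left mult.assoc)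
  also have "\<dots> = fsum (\<lambda>(k, l). A i k * A j l * dist (x k) (x l))"
    by (rule fsum_eq[symmetric]) (use K L in \<open>auto simp: K_def L_def\<close>)
  finally show ?thesis .
qed

theorem mainTheorem3:
  fixes a :: "int ^ 's \<Rightarrow> real" and x :: "int ^ 's \<Rightarrow> 'a::metric_space"
  assumes "hadamard_space TYPE('a)"
    and "is_mask a"
    and "bounded (range x)"
  shows "(\<forall>n i z. dist (((bary_scheme a) ^^ n) x i) z
            \<le> fsum (\<lambda>k. mask_pow a n (i - (2 ^ n) *s k) * dist (x k) z))
       \<and> (\<forall>n i j. dist (((bary_scheme a) ^^ n) x i) (((bary_scheme a) ^^ n) x j)
            \<le> fsum (\<lambda>(k, l). mask_pow a n (i - (2 ^ n) *s k) * mask_pow a n (j - (2 ^ n) *s l)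
                              * dist (x k) (x l)))"
proof (intro conjI allI)
  note pointwise = bary_scheme_iterate_dist[OF assms(1,2)]
  fix n i z
  show "dist (((bary_scheme a) ^^ n) x i) z
          \<le> fsum (\<lambda>k. mask_pow a n (i - (2 ^ n) *s k) * dist (x k) z)"
    by (rule pointwise)
next
  fix n i j
  show "dist (((bary_scheme a) ^^ n) x i) (((bary_scheme a) ^^ n) x j)
          \<le> fsum (\<lambda>(k, l). mask_pow a n (i - (2 ^ n) *s k) * mask_pow a n (j - (2 ^ n) *s l)
                            * dist (x k) (x l))"
    by (rule pairwise_dist_from_pointwise[where A = "\<lambda>i k. mask_pow a n (i - 2 ^ n *s k)"])
      (use bary_scheme_iterate_dist[OF assms(1,2)] mask_pow_shifted_finite_support[OF assms(2)]
        mask_pow_nonneg[OF assms(2)] in auto)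
qed

end
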